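(* In the FAVANO process, for every time step $t\ge0$, $$\mathbb{E}\|\mu_{t+1}-\mu_t\|^2\le\frac{s^2\eta^2}{n(n+1)^2}\sum_{i=1}^n\mathbb{E}\big\|\check h^i_{t+1}\big\|^2 .$$
   Context: FAVANO process. Fix integers $n\ge1$, $1\le s\le n$, $K\ge1$, $d\ge1$, a step size $\eta>0$ and differentiable $f_1,\dots,f_n:\mathbb{R}^d\to\mathbb{R}$, $f=\frac1n\sum_i f_i$. All random variables live on one probability space. For each client $i$ a stochastic gradient oracle returns, at a query point $x$, $\widetilde g^i(x)=\nabla f_i(x)+\xi$ where, conditionally on everything generated before the query (including $x$), $\xi$ has mean zero (each query uses fresh noise). Initialize $w_0\in\mathbb{R}^d$ deterministic and $w_0^i=w_0$ for all $i$. For each $t\ge1$, each client $i$ and each $q\ge1$ define recursively $\widetilde h^i_{t,q}=\widetilde g^i\big(w^i_{t-1}-\eta\sum_{r=1}^{q-1}\widetilde h^i_{t,r}\big)$. At each $t\ge1$ there are random integers $E^1_t,\dots,E^n_t\ge0$ with $\mathbf{P}(E^i_t>0)>0$, and a random subset $\mathcal{S}_t\subseteq\{1,\dots,n\}$ uniformly distributed among subsets of size $s$; the family $(\mathcal S_t,E^1_t,\dots,E^n_t)$ is independent of all the other randomness (the past up to time $t-1$ and all $\widetilde h^i_{t,q}$), and $\mathcal S_t$ is independent of $(E^i_t)_i$. The weight $\alpha^i_t$ is either $\mathbf{P}(E^i_t>0)\,(E^i_t\wedge K)$ (stochastic version) or $\mathbb{E}[E^i_t\wedge K]$ (deterministic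 version), where $a\wedge b=\min(a,b)$. Set $\check h^i_t=\frac{1}{\alpha^i_t}\sum_{q=1}^{E^i_t\wedge K}\widetilde h^i_{t,q}$ if $E^i_t>0$ and $\check h^i_t=0$ otherwise. Updates: $w_t=\frac{1}{s+1}\big(w_{t-1}+\sum_{i\in\mathcal S_t}(w^i_{t-1}-\eta\check h^i_t)\big)$; $w^i_t=w_t$ for $i\in\mathcal S_t$ and $w^i_t=w^i_{t-1}$ for $i\notin\mathcal S_t$. Define $\mu_t=\frac{1}{n+1}\big(w_t+\sum_{i=1}^n w^i_t\big)$. All expectations appearing are assumed finite. *)

theory Defs
  imports "HOL-Probability.Probability"
begin

definition ev_of :: "'a measure \<Rightarrow> ('a \<Rightarrow> 'b) \<Rightarrow> 'b measure \<Rightarrow> 'a set set" where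
  "ev_of M X N = {X -` B \<inter> space M | B. B \<in> sets N}"

definition fav_alpha :: "'a measure \<Rightarrow> nat \<Rightarrow> bool \<Rightarrow> (nat \<Rightarrow> nat \<Rightarrow> 'a \<Rightarrow> nat)
    \<Rightarrow> nat \<Rightarrow> nat \<Rightarrow> 'a \<Rightarrow> real" where
  "fav_alpha M K stoch E t i \<omega> =
     (if stoch then measure M {\<omega>'\<in>space M. 0 < E t i \<omega>'} * real (min (E t i \<omega>) K)
      else integral\<^sup>L M (\<lambda>\<omega>'. real (min (E t i \<omega>') K)))"

text \<open>check h^i_t; h t i q is the q-th stochastic gradient of client i in round t.\<close>
definition fav_hcheck :: "'a measure \<Rightarrow> nat \<Rightarrow> bool \<Rightarrow> (nat \<Rightarrow> nat \<Rightarrow> 'a \<Rightarrow> nat)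
    \<Rightarrow> (nat \<Rightarrow> nat \<Rightarrow> nat \<Rightarrow> 'a \<Rightarrow> 'v::euclidean_space) \<Rightarrow> nat \<Rightarrow> nat \<Rightarrow> 'a \<Rightarrow> 'v" where
  "fav_hcheck M K stoch E h t i \<omega> =
     (if 0 < E t i \<omega>
      then (1 / fav_alpha M K stoch E t i \<omega>) *\<^sub>R (\<Sum>q\<in>{1..min (E t i \<omega>) K}. h t i q \<omega>)
      else 0)"

text \<open>State at time t: (server model w_t, client models i \<mapsto> w^i_t).\<close>
primrec fav_state :: "'a measure \<Rightarrow> nat \<Rightarrow> nat \<Rightarrow> real \<Rightarrow> bool \<Rightarrow> 'v::euclidean_space
    \<Rightarrow> (nat \<Rightarrow> nat \<Rightarrow> 'a \<Rightarrow> nat) \<Rightarrow> (nat \<Rightarrow> 'a \<Rightarrow> nat set)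
    \<Rightarrow> (nat \<Rightarrow> nat \<Rightarrow> nat \<Rightarrow> 'a \<Rightarrow> 'v) \<Rightarrow> nat \<Rightarrow> 'a \<Rightarrow> 'v \<times> (nat \<Rightarrow> 'v)" where
  "fav_state M s K eta stoch w0 E S h 0 \<omega> = (w0, \<lambda>i. w0)"
| "fav_state M s K eta stoch w0 E S h (Suc t) \<omega> =
     (let w = fst (fav_state M s K eta stoch w0 E S h t \<omega>);
          wc = snd (fav_state M s K eta stoch w0 E S h t \<omega>);
          wn = (1 / (real s + 1)) *\<^sub>R
                 (w + (\<Sum>i\<in>S (Suc t) \<omega>. (wc i - eta *\<^sub>R fav_hcheck M K stoch E h (Suc t) i \<omega>)))
      in (wn, \<lambda>i. if i \<in> S (Suc t) \<omega> then wn else wc i))"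

definition fav_mu :: "'a measure \<Rightarrow> nat \<Rightarrow> nat \<Rightarrow> nat \<Rightarrow> real \<Rightarrow> bool \<Rightarrow> 'v::euclidean_space
    \<Rightarrow> (nat \<Rightarrow> nat \<Rightarrow> 'a \<Rightarrow> nat) \<Rightarrow> (nat \<Rightarrow> 'a \<Rightarrow> nat set)
    \<Rightarrow> (nat \<Rightarrow> nat \<Rightarrow> nat \<Rightarrow> 'a \<Rightarrow> 'v) \<Rightarrow> nat \<Rightarrow> 'a \<Rightarrow> 'v" where
  "fav_mu M n s K eta stoch w0 E S h t \<omega> =
     (1 / (real n + 1)) *\<^sub>R (fst (fav_state M s K eta stoch w0 E S h t \<omega>)
        + (\<Sum>i\<in>{1..n}. snd (fav_state M s K eta stoch w0 E S h t \<omega>) i))"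

text \<open>Query point of the q-th local step of client i in round t (t \<ge> 1).\<close>
definition fav_query :: "'a measure \<Rightarrow> nat \<Rightarrow> nat \<Rightarrow> real \<Rightarrow> bool \<Rightarrow> 'v::euclidean_space
    \<Rightarrow> (nat \<Rightarrow> nat \<Rightarrow> 'a \<Rightarrow> nat) \<Rightarrow> (nat \<Rightarrow> 'a \<Rightarrow> nat set)
    \<Rightarrow> (nat \<Rightarrow> nat \<Rightarrow> nat \<Rightarrow> 'a \<Rightarrow> 'v) \<Rightarrow> nat \<Rightarrow> nat \<Rightarrow> nat \<Rightarrow> 'a \<Rightarrow> 'v" where
  "fav_query M s K eta stoch w0 E S h t i q \<omega> =
     snd (fav_state M s K eta stoch w0 E S h (t - 1) \<omega>) i - eta *\<^sub>R (\<Sum>r\<in>{1..<q}. h t i r \<omega>)"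

text \<open>Generators of the sigma-algebra of the randomness up to time t-1:
  S_r, E^i_r and all stochastic gradients of rounds r < t.\<close>
definition fav_past_gen :: "'a measure \<Rightarrow> nat \<Rightarrow> (nat \<Rightarrow> nat \<Rightarrow> 'a \<Rightarrow> nat) \<Rightarrow> (nat \<Rightarrow> 'a \<Rightarrow> nat set)
    \<Rightarrow> (nat \<Rightarrow> nat \<Rightarrow> nat \<Rightarrow> 'a \<Rightarrow> 'v::euclidean_space) \<Rightarrow> nat \<Rightarrow> 'a set set" where
  "fav_past_gen M n E S h t =
     (\<Union>r\<in>{1..<t}. ev_of M (S r) (count_space UNIV)
        \<union> (\<Union>i\<in>{1..n}. ev_of M (E r i) (count_space UNIV))
        \<union> (\<Union>i\<in>{1..n}. \<Union>q\<in>{1..}. ev_of M (h r i q) borel))"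

definition fav_now_gen :: "'a measure \<Rightarrow> nat \<Rightarrow> (nat \<Rightarrow> nat \<Rightarrow> 'a \<Rightarrow> nat) \<Rightarrow> (nat \<Rightarrow> 'a \<Rightarrow> nat set)
    \<Rightarrow> nat \<Rightarrow> 'a set set" where
  "fav_now_gen M n E S t =
     ev_of M (S t) (count_space UNIV) \<union> (\<Union>i\<in>{1..n}. ev_of M (E t i) (count_space UNIV))"

definition fav_other_gen :: "'a measure \<Rightarrow> nat \<Rightarrow> (nat \<Rightarrow> nat \<Rightarrow> 'a \<Rightarrow> nat) \<Rightarrow> (nat \<Rightarrow> 'a \<Rightarrow> nat set)
    \<Rightarrow> (nat \<Rightarrow> nat \<Rightarrow> nat \<Rightarrow> 'a \<Rightarrow> 'v::euclidean_space) \<Rightarrow> nat \<Rightarrow> 'a set set" where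
  "fav_other_gen M n E S h t =
     fav_past_gen M n E S h t \<union> (\<Union>i\<in>{1..n}. \<Union>q\<in>{1..}. ev_of M (h t i q) borel)"

text \<open>Generators of the information available before the q-th query of client i in round t:
  the past up to t-1 and the previous answers h t i r, r < q, of that client.\<close>
definition fav_query_gen :: "'a measure \<Rightarrow> nat \<Rightarrow> (nat \<Rightarrow> nat \<Rightarrow> 'a \<Rightarrow> nat) \<Rightarrow> (nat \<Rightarrow> 'a \<Rightarrow> nat set)
    \<Rightarrow> (nat \<Rightarrow> nat \<Rightarrow> nat \<Rightarrow> 'a \<Rightarrow> 'v::euclidean_space) \<Rightarrow> nat \<Rightarrow> nat \<Rightarrow> nat \<Rightarrow> 'a set set" where
  "fav_query_gen M n E S h t i q =
     fav_past_gen M n E S h t \<union> (\<Union>r\<in>{1..<q}. ev_of M (h t i r) borel)"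

end

theory Submission imports Defs begin

(*
  The averaging step replaces the server model and the s sampled client models by their common
  mean, so w_t + sum_i w^i_t changes only by -eta times the sum of the s local updates sent.
  By Cauchy-Schwarz over these s summands, (n+1)^2 |mu_(t+1) - mu_t|^2 is at most
  eta^2 s sum_i 1{i in S_(t+1)} |hcheck^i_(t+1)|^2. The participation event {i in S_(t+1)} has
  probability s/n and is independent of hcheck^i_(t+1), a function of E^i_(t+1) and the
  stochastic gradients of that round. Neither the gradient oracle nor f enters the argument.
*)

subsection \<open>The averaging step\<close>

lemma norm_sum_squared_le_card_sum_squares:
  fixes x :: "'i \<Rightarrow> 'v::real_normed_vector"
  assumes "finite A"
  shows "(norm (\<Sum>i\<in>A. x i))\<^sup>2 \<le> real (card A) * (\<Sum>i\<in>A. (norm (x i))\<^sup>2)"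
proof -
  have "(norm (\<Sum>i\<in>A. x i))\<^sup>2 \<le> (\<Sum>i\<in>A. norm (x i))\<^sup>2"
    by (intro power_mono norm_sum) auto
  also have "\<dots> \<le> (\<Sum>i\<in>A. (norm (x i))\<^sup>2) * card A"
    by (rule sum_squared_le_sum_of_squares)
  finally show ?thesis by (simp add: mult.commute)
qed

lemma sum_after_partial_averaging:
  fixes w :: "'v::real_vector"
  assumes "finite N" "T \<subseteq> N" "card T = s"
    and wn: "wn = (1 / (real s + 1)) *\<^sub>R (w + (\<Sum>i\<in>T. wc i - eta *\<^sub>R H i))"
  shows "(wn + (\<Sum>i\<in>N. if i \<in> T then wn else wc i)) - (w + (\<Sum>i\<in>N. wc i))
       = - (eta *\<^sub>R (\<Sum>i\<in>T. H i))"
proof -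
  have "finite T" using assms finite_subset by blast
  then have "(\<Sum>i\<in>N. if i \<in> T then wn else wc i) = real s *\<^sub>R wn + (\<Sum>i\<in>N - T. wc i)"
    using assms by (simp add: sum.If_cases Int_absorb1 Diff_eq[symmetric] Int_commute sum_constant_scaleR)
  moreover have "(\<Sum>i\<in>N. wc i) = (\<Sum>i\<in>T. wc i) + (\<Sum>i\<in>N - T. wc i)"
    using assms by (metis add.commute sum.subset_diff)
  moreover have "wn + real s *\<^sub>R wn = (real s + 1) *\<^sub>R wn" by (simp add: algebra_simps)
  moreover have "\<dots> = w + (\<Sum>i\<in>T. wc i) - eta *\<^sub>R (\<Sum>i\<in>T. H i)"
    unfolding wn by (simp add: sum_subtractf scaleR_sum_right)
  ultimately show ?thesis by (simp add: algebra_simps)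
qed

lemma fav_mu_Suc_diff:
  assumes "S (Suc t) \<omega> \<subseteq> {1..n}" "card (S (Suc t) \<omega>) = s"
  shows "fav_mu M n s K eta stoch w0 E S h (Suc t) \<omega> - fav_mu M n s K eta stoch w0 E S h t \<omega>
       = - (eta / (real n + 1)) *\<^sub>R (\<Sum>i\<in>S (Suc t) \<omega>. fav_hcheck M K stoch E h (Suc t) i \<omega>)"
proof -
  define w where "w = fst (fav_state M s K eta stoch w0 E S h t \<omega>)"
  define wc where "wc = snd (fav_state M s K eta stoch w0 E S h t \<omega>)"
  define H where "H i = fav_hcheck M K stoch E h (Suc t) i \<omega>" for i
  define wn where "wn = (1 / (real s + 1)) *\<^sub>R (w + (\<Sum>i\<in>S (Suc t) \<omega>. wc i - eta *\<^sub>R H i))"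
  have "fav_state M s K eta stoch w0 E S h (Suc t) \<omega>
      = (wn, \<lambda>i. if i \<in> S (Suc t) \<omega> then wn else wc i)"
    unfolding wn_def w_def wc_def H_def by (simp add: Let_def)
  then have "fav_mu M n s K eta stoch w0 E S h (Suc t) \<omega> - fav_mu M n s K eta stoch w0 E S h t \<omega>
      = (1 / (real n + 1)) *\<^sub>R ((wn + (\<Sum>i\<in>{1..n}. if i \<in> S (Suc t) \<omega> then wn else wc i))
                                  - (w + (\<Sum>i\<in>{1..n}. wc i)))"
    unfolding fav_mu_def w_def wc_def by (simp add: scaleR_diff_right)
  also have "\<dots> = (1 / (real n + 1)) *\<^sub>R (- (eta *\<^sub>R (\<Sum>i\<in>S (Suc t) \<omega>. H i)))"
    using assms by (subst sum_after_partial_averaging[OF _ _ _ wn_def]) auto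
  finally show ?thesis by (simp add: H_def)
qed

lemma norm_fav_mu_Suc_diff_le:
  assumes "\<omega> \<in> space M" "S (Suc t) \<omega> \<subseteq> {1..n}" "card (S (Suc t) \<omega>) = s"
  shows "(norm (fav_mu M n s K eta stoch w0 E S h (Suc t) \<omega> - fav_mu M n s K eta stoch w0 E S h t \<omega>))\<^sup>2
    \<le> eta\<^sup>2 * real s / (real n + 1)\<^sup>2 * (\<Sum>i\<in>{1..n}. indicator {\<omega>\<in>space M. i \<in> S (Suc t) \<omega>} \<omega>
                                      * (norm (fav_hcheck M K stoch E h (Suc t) i \<omega>))\<^sup>2)"
proof -
  let ?T = "S (Suc t) \<omega>" and ?H = "fav_hcheck M K stoch E h (Suc t)"
  have "finite ?T" using assms(2) finite_subset by blast
  have "(norm (fav_mu M n s K eta stoch w0 E S h (Suc t) \<omega> - fav_mu M n s K eta stoch w0 E S h t \<omega>))\<^sup>2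
      = eta\<^sup>2 / (real n + 1)\<^sup>2 * (norm (\<Sum>i\<in>?T. ?H i \<omega>))\<^sup>2"
    using assms by (simp add: fav_mu_Suc_diff power_mult_distrib power_divide)
  also have "\<dots> \<le> eta\<^sup>2 / (real n + 1)\<^sup>2 * (real s * (\<Sum>i\<in>?T. (norm (?H i \<omega>))\<^sup>2))"
    using norm_sum_squared_le_card_sum_squares[OF \<open>finite ?T\<close>] assms(3)
    by (intro mult_left_mono) auto
  also have "(\<Sum>i\<in>?T. (norm (?H i \<omega>))\<^sup>2) = (\<Sum>i\<in>{1..n}. if i \<in> ?T then (norm (?H i \<omega>))\<^sup>2 else 0)"
    using assms(2) by (simp add: sum.inter_restrict[symmetric] Int_absorb1)
  also have "\<dots> = (\<Sum>i\<in>{1..n}. indicator {\<omega>\<in>space M. i \<in> ?T} \<omega> * (norm (?H i \<omega>))\<^sup>2)"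
    using assms(1) by (intro sum.cong) auto
  finally show ?thesis by (simp add: mult_ac)
qed

subsection \<open>Uniformly distributed random subsets\<close>

lemma (in prob_space) prob_uniform_subset_in:
  assumes S: "S \<in> measurable M (count_space UNIV)"
    and unif: "\<forall>A. A \<subseteq> I \<and> card A = k \<longrightarrow> prob {\<omega>\<in>space M. S \<omega> = A} = 1 / real (card I choose k)"
    and "finite I" and V: "V \<subseteq> {A. A \<subseteq> I \<and> card A = k}"
  shows "prob {\<omega>\<in>space M. S \<omega> \<in> V} = real (card V) / real (card I choose k)"
proof -
  have "finite V"
    using finite_subset[OF V] finite_subset[of "{A. A \<subseteq> I \<and> card A = k}" "Pow I"] \<open>finite I\<close>
    by auto
  have "{\<omega>\<in>space M. S \<omega> \<in> V} = (\<Union>A\<in>V. {\<omega>\<in>space M. S \<omega> = A})" by auto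
  moreover have "{\<omega>\<in>space M. S \<omega> = A} \<in> events" for A using S by measurable
  ultimately have "prob {\<omega>\<in>space M. S \<omega> \<in> V} = (\<Sum>A\<in>V. prob {\<omega>\<in>space M. S \<omega> = A})"
    using \<open>finite V\<close> by (simp, intro measure_finite_Union)
      (auto simp: disjoint_family_on_def emeasure_eq_measure)
  also have "\<dots> = (\<Sum>A\<in>V. 1 / real (card I choose k))"
    using V unif by (intro sum.cong) auto
  finally show ?thesis by simp
qed

lemma (in prob_space) AE_uniform_subset:
  assumes S: "S \<in> measurable M (count_space UNIV)"
    and unif: "\<forall>A. A \<subseteq> I \<and> card A = k \<longrightarrow> prob {\<omega>\<in>space M. S \<omega> = A} = 1 / real (card I choose k)"
    and "finite I" "k \<le> card I"
  shows "AE \<omega> in M. S \<omega> \<subseteq> I \<and> card (S \<omega>) = k"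
proof -
  let ?U = "{A. A \<subseteq> I \<and> card A = k}"
  have "card ?U = card I choose k" using n_subsets[OF \<open>finite I\<close>] by simp
  then have "prob {\<omega>\<in>space M. S \<omega> \<in> ?U} = 1"
    using prob_uniform_subset_in[OF S unif \<open>finite I\<close>, of ?U] \<open>k \<le> card I\<close> by simp
  moreover have "{\<omega>\<in>space M. S \<omega> \<in> ?U} \<in> events" using S by measurable
  ultimately show ?thesis using AE_in_set_eq_1 by fastforce
qed

lemma (in prob_space) prob_mem_uniform_subset:
  assumes S: "S \<in> measurable M (count_space UNIV)"
    and unif: "\<forall>A. A \<subseteq> I \<and> card A = k \<longrightarrow> prob {\<omega>\<in>space M. S \<omega> = A} = 1 / real (card I choose k)"
    and "finite I" "k \<le> card I" "i \<in> I"
  shows "prob {\<omega>\<in>space M. i \<in> S \<omega>} = real k / real (card I)"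
proof -
  let ?U = "{A. A \<subseteq> I \<and> card A = k}" and ?V = "{A. A \<subseteq> I - {i} \<and> card A = k}"
  let ?W = "{A \<in> ?U. i \<in> A}"
  have "finite ?U" using \<open>finite I\<close> by (simp add: finite_subset[of _ "Pow I"])
  moreover have "?V \<subseteq> ?U" "?W = ?U - ?V" by auto
  ultimately have "card ?W = card ?U - card ?V" "card ?V \<le> card ?U"
    by (simp_all add: card_Diff_subset finite_subset card_mono)
  moreover have "card ?U = card I choose k" using n_subsets[OF \<open>finite I\<close>] by simp
  moreover have "card ?V = (card I - 1) choose k" using n_subsets[of "I - {i}"] assms(3,5) by simp
  ultimately have card_W: "real (card ?W) = real (card I choose k) - real ((card I - 1) choose k)"
    by (simp add: of_nat_diff)
  have ev: "{\<omega>\<in>space M. S \<omega> \<in> V} \<in> events" for V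
    using measurable_sets_Collect[OF S, of "\<lambda>A. A \<in> V"] by simp
  have "{\<omega>\<in>space M. i \<in> S \<omega>} = {\<omega>\<in>space M. S \<omega> \<in> {A. i \<in> A}}" by simp
  also have "prob \<dots> = prob {\<omega>\<in>space M. S \<omega> \<in> ?W}"
    using AE_uniform_subset[OF S unif \<open>finite I\<close> \<open>k \<le> card I\<close>]
    by (intro measure_eq_AE ev, elim eventually_mono) auto
  also have "\<dots> = (real (card I choose k) - real ((card I - 1) choose k)) / real (card I choose k)"
    using prob_uniform_subset_in[OF S unif \<open>finite I\<close>, of ?W] card_W by (simp add: subset_iff)
  also have "\<dots> = real k / real (card I)"
  proof -
    have "(real (card I) - real k) * real (card I choose k) = real (card I) * real ((card I - 1) choose k)"
      using binomial_absorb_comp[of "card I" k] \<open>k \<le> card I\<close> by (metis of_nat_diff of_nat_mult)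
    moreover have "0 < card I choose k" "0 < card I" using assms(3-5) by (auto simp: card_gt_0_iff)
    ultimately show ?thesis by (simp add: field_simps)
  qed
  finally show ?thesis .
qed

subsection \<open>Independence\<close>

lemma (in prob_space) indep_set_sigma_sets_Un:
  assumes AB_C: "indep_set (sigma_sets (space M) (A \<union> B)) (sigma_sets (space M) C)"
    and A_B: "indep_set (sigma_sets (space M) A) (sigma_sets (space M) B)"
  shows "indep_set (sigma_sets (space M) A) (sigma_sets (space M) (B \<union> C))"
proof -
  let ?\<sigma> = "sigma_sets (space M)"
  define D where "D = {b \<inter> c | b c. b \<in> ?\<sigma> B \<and> c \<in> ?\<sigma> C}"
  have ev: "?\<sigma> A \<subseteq> events" "?\<sigma> B \<subseteq> events" "?\<sigma> C \<subseteq> events"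
    using indep_setD_ev1[OF A_B] indep_setD_ev2[OF A_B] indep_setD_ev2[OF AB_C] by auto
  then have Pow: "A \<subseteq> Pow (space M)" "B \<subseteq> Pow (space M)" "C \<subseteq> Pow (space M)"
    using sets.sets_into_space by blast+
  have Int_\<sigma>: "x \<inter> y \<in> ?\<sigma> G" if "G \<subseteq> Pow (space M)" "x \<in> ?\<sigma> G" "y \<in> ?\<sigma> G" for G x y
    using sets.Int[of x "sigma (space M) G" y] that by simp
  have \<sigma>_mono: "x \<in> ?\<sigma> (A \<union> B)" if "x \<in> ?\<sigma> A \<or> x \<in> ?\<sigma> B" for x
    using that sigma_sets_mono'[of A "A \<union> B"] sigma_sets_mono'[of B "A \<union> B"] by blast
  have "indep_set (?\<sigma> A) D"
    unfolding indep_sets2_eq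
  proof (intro conjI ballI)
    show "D \<subseteq> events" unfolding D_def using ev by blast
    fix a d assume a: "a \<in> ?\<sigma> A" and "d \<in> D"
    then obtain b c where d: "d = b \<inter> c" and b: "b \<in> ?\<sigma> B" and c: "c \<in> ?\<sigma> C"
      unfolding D_def by blast
    have "a \<inter> b \<in> ?\<sigma> (A \<union> B)" using Pow \<sigma>_mono a b by (intro Int_\<sigma>) auto
    then have "prob (a \<inter> d) = prob (a \<inter> b) * prob c"
      using indep_setD[OF AB_C _ c] d by (simp add: Int_assoc[symmetric])
    also have "\<dots> = prob a * prob (b \<inter> c)"
      using indep_setD[OF A_B a b] indep_setD[OF AB_C _ c] \<sigma>_mono b by simp
    finally show "prob (a \<inter> d) = prob a * prob d" using d by simp
  qed (use ev in simp)
  moreover have "Int_stable (?\<sigma> A)"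
    using Int_\<sigma>[OF Pow(1)] unfolding Int_stable_def by blast
  moreover have "Int_stable D"
    unfolding Int_stable_def D_def
  proof clarify
    fix b c b' c' assume "b \<in> ?\<sigma> B" "c \<in> ?\<sigma> C" "b' \<in> ?\<sigma> B" "c' \<in> ?\<sigma> C"
    then have "(b \<inter> b') \<inter> (c \<inter> c') \<in> D"
      unfolding D_def using Int_\<sigma> Pow by blast
    then show "\<exists>x y. b \<inter> c \<inter> (b' \<inter> c') = x \<inter> y \<and> x \<in> ?\<sigma> B \<and> y \<in> ?\<sigma> C"
      unfolding D_def by (auto simp: Int_ac)
  qed
  ultimately have "indep_set (?\<sigma> (?\<sigma> A)) (?\<sigma> D)"
    by (rule indep_set_sigma_sets)
  moreover have "?\<sigma> (B \<union> C) \<subseteq> ?\<sigma> D"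
  proof (rule sigma_sets_mono, safe)
    fix x assume "x \<in> B"
    then have "x \<inter> space M \<in> D" unfolding D_def using sigma_sets_top by blast
    then show "x \<in> ?\<sigma> D" using Pow \<open>x \<in> B\<close> by (auto simp: Int_absorb2)
  next
    fix x assume "x \<in> C"
    then have "space M \<inter> x \<in> D" unfolding D_def using sigma_sets_top by blast
    then show "x \<in> ?\<sigma> D" using Pow \<open>x \<in> C\<close> by (auto simp: Int_absorb1)
  qed
  ultimately show ?thesis
    unfolding sigma_sets_sigma_sets_eq[OF Pow(1)] indep_sets2_eq by blast
qed

lemma (in prob_space) indep_var_if_indep_generators:
  assumes indep: "indep_set (sigma_sets (space M) F) (sigma_sets (space M) G)"
    and X: "X \<in> measurable (sigma (space M) F) N"
    and Y: "Y \<in> measurable (sigma (space M) G) N'"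
  shows "indep_var N X N' Y"
proof -
  have "F \<subseteq> Pow (space M)" "G \<subseteq> Pow (space M)"
    using indep_setD_ev1[OF indep] indep_setD_ev2[OF indep] sets.sets_into_space by blast+
  then have sets: "sets (sigma (space M) F) = sigma_sets (space M) F"
    "sets (sigma (space M) G) = sigma_sets (space M) G"
    by (simp_all add: sets_measure_of)
  have subalg: "subalgebra M (sigma (space M) F)" "subalgebra M (sigma (space M) G)"
    unfolding subalgebra_def using sets indep_setD_ev1[OF indep] indep_setD_ev2[OF indep]
    by (auto simp: space_measure_of_conv)
  have "sigma_sets (space M) {X -` A \<inter> space M | A. A \<in> sets N} \<subseteq> sigma_sets (space M) F"
    using measurable_sets[OF X] sets by (intro sigma_sets_mono) (auto simp: space_measure_of_conv)
  moreover have "sigma_sets (space M) {Y -` A \<inter> space M | A. A \<in> sets N'} \<subseteq> sigma_sets (space M) G"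
    using measurable_sets[OF Y] sets by (intro sigma_sets_mono) (auto simp: space_measure_of_conv)
  ultimately show ?thesis
    unfolding indep_var_eq using indep measurable_from_subalg[OF subalg(1) X]
      measurable_from_subalg[OF subalg(2) Y] unfolding indep_sets2_eq by blast
qed

lemma (in prob_space) integral_indicator_mult_indep:
  fixes Y :: "'a \<Rightarrow> real"
  assumes indep: "indep_var borel (indicator A) borel Y" and "A \<in> events" "integrable M Y"
  shows "integrable M (\<lambda>\<omega>. indicator A \<omega> * Y \<omega>)"
    and "(\<integral>\<omega>. indicator A \<omega> * Y \<omega> \<partial>M) = prob A * expectation Y"
proof -
  have "integrable M (indicator A :: 'a \<Rightarrow> real)"
    using \<open>A \<in> events\<close> by (simp add: integrable_indicator_iff emeasure_eq_measure)
  then show "integrable M (\<lambda>\<omega>. indicator A \<omega> * Y \<omega>)"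
    and "(\<integral>\<omega>. indicator A \<omega> * Y \<omega> \<partial>M) = prob A * expectation Y"
    using indep_var_integrable[OF indep _ \<open>integrable M Y\<close>]
      indep_var_lebesgue_integral[OF indep _ \<open>integrable M Y\<close>] \<open>A \<in> events\<close>
    by (simp_all add: emeasure_eq_measure)
qed

lemma integral_le_scaled_sum_AE:
  fixes X :: "'i \<Rightarrow> 'a \<Rightarrow> real"
  assumes "AE \<omega> in M. g \<omega> \<le> c * (\<Sum>i\<in>I. X i \<omega>)" "0 \<le> c"
    and int: "\<And>i. i \<in> I \<Longrightarrow> integrable M (X i)" and "\<And>i \<omega>. i \<in> I \<Longrightarrow> 0 \<le> X i \<omega>"
  shows "(\<integral>\<omega>. g \<omega> \<partial>M) \<le> c * (\<Sum>i\<in>I. \<integral>\<omega>. X i \<omega> \<partial>M)"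
proof -
  have "(\<integral>\<omega>. g \<omega> \<partial>M) \<le> (\<integral>\<omega>. c * (\<Sum>i\<in>I. X i \<omega>) \<partial>M)"
    using assms(2-4) by (intro integral_mono_AE'[OF _ assms(1)] AE_I2 integrable_mult_right
        Bochner_Integration.integrable_sum mult_nonneg_nonneg sum_nonneg) auto
  also have "\<dots> = c * (\<Sum>i\<in>I. \<integral>\<omega>. X i \<omega> \<partial>M)"
    by (subst integral_mult_right_zero, subst Bochner_Integration.integral_sum) (use int in auto)
  finally show ?thesis .
qed

subsection \<open>The FAVANO process\<close>

lemma ev_of_subset_Pow: "ev_of M X N \<subseteq> Pow (space M)"
  by (auto simp: ev_of_def)

lemma measurable_sigma_if_ev_of_subset:
  assumes "X \<in> measurable M N" "ev_of M X N \<subseteq> G" "G \<subseteq> Pow (space M)"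
  shows "X \<in> measurable (sigma (space M) G) N"
  using assms measurable_space[OF assms(1)]
  by (auto simp: measurable_def ev_of_def sets_measure_of)

lemma borel_measurable_fav_hcheck:
  assumes E: "E t i \<in> measurable N (count_space UNIV)"
    and h: "\<And>q. q \<ge> 1 \<Longrightarrow> h t i q \<in> borel_measurable N"
  shows "fav_hcheck M K stoch E h t i \<in> borel_measurable N"
proof -
  define a where "a k = (if stoch then measure M {\<omega>\<in>space M. 0 < E t i \<omega>} * real (min k K)
      else integral\<^sup>L M (\<lambda>\<omega>. real (min (E t i \<omega>) K)))" for k
  define F where "F k \<omega> = (if 0 < k then (1 / a k) *\<^sub>R (\<Sum>q\<in>{1..min k K}. h t i q \<omega>) else 0)"
    for k \<omega>
  have "fav_hcheck M K stoch E h t i = (\<lambda>\<omega>. F (E t i \<omega>) \<omega>)"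
    unfolding fav_hcheck_def F_def a_def fav_alpha_def by auto
  moreover have "(\<lambda>\<omega>. F (E t i \<omega>) \<omega>) \<in> borel_measurable N"
  proof (rule measurable_compose_countable'[OF _ E])
    fix k
    show "F k \<in> borel_measurable N"
      unfolding F_def using h by (cases "0 < k") (auto intro!: borel_measurable_sum)
  qed auto
  ultimately show ?thesis by simp
qed

lemma (in prob_space) indep_var_participation_hcheck:
  assumes indep_other: "indep_set (sigma_sets (space M) (fav_now_gen M n E S r))
                                  (sigma_sets (space M) (fav_other_gen M n E S h r))"
    and indep_SE: "indep_set (sigma_sets (space M) (ev_of M (S r) (count_space UNIV)))
              (sigma_sets (space M) (\<Union>j\<in>{1..n}. ev_of M (E r j) (count_space UNIV)))"
    and E: "E r i \<in> measurable M (count_space UNIV)"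
    and h: "\<And>q. q \<ge> 1 \<Longrightarrow> h r i q \<in> borel_measurable M"
    and "i \<in> {1..n}"
  shows "indep_var borel (indicator {\<omega>\<in>space M. i \<in> S r \<omega>} :: 'a \<Rightarrow> real)
                   borel (\<lambda>\<omega>. (norm (fav_hcheck M K stoch E h r i \<omega>))\<^sup>2)"
proof -
  let ?GS = "ev_of M (S r) (count_space UNIV)"
  let ?G = "(\<Union>j\<in>{1..n}. ev_of M (E r j) (count_space UNIV)) \<union> fav_other_gen M n E S h r"
  have G_Pow: "?G \<subseteq> Pow (space M)"
    by (auto simp: fav_other_gen_def fav_past_gen_def ev_of_def)
  have "{\<omega>\<in>space M. i \<in> S r \<omega>} \<in> ?GS"
    unfolding ev_of_def by (intro CollectI exI[of _ "{A. i \<in> A}"]) auto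
  then have "indicator {\<omega>\<in>space M. i \<in> S r \<omega>} \<in> borel_measurable (sigma (space M) ?GS)"
    by (intro borel_measurable_indicator) (auto simp: sets_measure_of ev_of_subset_Pow)
  moreover have "(\<lambda>\<omega>. (norm (fav_hcheck M K stoch E h r i \<omega>))\<^sup>2) \<in> borel_measurable (sigma (space M) ?G)"
  proof -
    have "E r i \<in> measurable (sigma (space M) ?G) (count_space UNIV)"
      using E G_Pow \<open>i \<in> {1..n}\<close> by (intro measurable_sigma_if_ev_of_subset) auto
    moreover have "h r i q \<in> borel_measurable (sigma (space M) ?G)" if "q \<ge> 1" for q
      using h[OF that] G_Pow \<open>i \<in> {1..n}\<close> that
      by (intro measurable_sigma_if_ev_of_subset) (auto simp: fav_other_gen_def)
    ultimately have [measurable]: "fav_hcheck M K stoch E h r i \<in> borel_measurable (sigma (space M) ?G)"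
      by (rule borel_measurable_fav_hcheck)
    show ?thesis by measurable
  qed
  moreover have "indep_set (sigma_sets (space M) ?GS) (sigma_sets (space M) ?G)"
    using indep_other indep_SE unfolding fav_now_gen_def by (rule indep_set_sigma_sets_Un)
  ultimately show ?thesis
    by (intro indep_var_if_indep_generators)
qed

lemma (in prob_space) integral_participation_hcheck:
  assumes indep_other: "indep_set (sigma_sets (space M) (fav_now_gen M n E S r))
                                  (sigma_sets (space M) (fav_other_gen M n E S h r))"
    and indep_SE: "indep_set (sigma_sets (space M) (ev_of M (S r) (count_space UNIV)))
              (sigma_sets (space M) (\<Union>j\<in>{1..n}. ev_of M (E r j) (count_space UNIV)))"
    and S: "S r \<in> measurable M (count_space UNIV)"
    and unif: "\<forall>A. A \<subseteq> {1..n} \<and> card A = s \<longrightarrow> prob {\<omega>\<in>space M. S r \<omega> = A} = 1 / real (n choose s)"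
    and E: "E r i \<in> measurable M (count_space UNIV)"
    and h: "\<And>q. q \<ge> 1 \<Longrightarrow> h r i q \<in> borel_measurable M"
    and int: "integrable M (\<lambda>\<omega>. (norm (fav_hcheck M K stoch E h r i \<omega>))\<^sup>2)"
    and "s \<le> n" "i \<in> {1..n}"
  shows "integrable M (\<lambda>\<omega>. indicator {\<omega>\<in>space M. i \<in> S r \<omega>} \<omega>
                           * (norm (fav_hcheck M K stoch E h r i \<omega>))\<^sup>2)"
    and "(\<integral>\<omega>. indicator {\<omega>\<in>space M. i \<in> S r \<omega>} \<omega> * (norm (fav_hcheck M K stoch E h r i \<omega>))\<^sup>2 \<partial>M)
       = real s / real n * (\<integral>\<omega>. (norm (fav_hcheck M K stoch E h r i \<omega>))\<^sup>2 \<partial>M)"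
  using integral_indicator_mult_indep[OF
      indep_var_participation_hcheck[OF indep_other indep_SE E h \<open>i \<in> {1..n}\<close>]
      measurable_sets_Collect[OF S, of "\<lambda>A. i \<in> A"] int]
    prob_mem_uniform_subset[OF S, of "{1..n}" s i] unif assms(8,9)
  by simp_all

theorem mainTheorem10:
  fixes M :: "'a measure" and n s K :: nat and eta :: real and stoch :: bool
    and w0 :: "'v::euclidean_space" and f :: "nat \<Rightarrow> 'v \<Rightarrow> real" and gradf :: "nat \<Rightarrow> 'v \<Rightarrow> 'v"
    and E :: "nat \<Rightarrow> nat \<Rightarrow> 'a \<Rightarrow> nat" and S :: "nat \<Rightarrow> 'a \<Rightarrow> nat set"
    and h :: "nat \<Rightarrow> nat \<Rightarrow> nat \<Rightarrow> 'a \<Rightarrow> 'v" and t :: nat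
  assumes P: "prob_space M"
    and n_pos: "1 \<le> n" and s_bounds: "1 \<le> s" "s \<le> n" and K_pos: "1 \<le> K" and eta_pos: "0 < eta"
    and grad: "\<forall>i\<in>{1..n}. \<forall>x. GDERIV (f i) x :> gradf i x"
    and S_meas: "\<forall>r\<ge>1. S r \<in> measurable M (count_space UNIV)"
    and S_unif: "\<forall>r\<ge>1. \<forall>A. A \<subseteq> {1..n} \<and> card A = s \<longrightarrow>
                   measure M {\<omega>\<in>space M. S r \<omega> = A} = 1 / real (n choose s)"
    and E_meas: "\<forall>r\<ge>1. \<forall>i\<in>{1..n}. E r i \<in> measurable M (count_space UNIV)"
    and E_pos: "\<forall>r\<ge>1. \<forall>i\<in>{1..n}. 0 < measure M {\<omega>\<in>space M. 0 < E r i \<omega>}"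
    and h_meas: "\<forall>r\<ge>1. \<forall>i\<in>{1..n}. \<forall>q\<ge>1. h r i q \<in> borel_measurable M"
    and noise_mean_zero: "\<forall>r\<ge>1. \<forall>i\<in>{1..n}. \<forall>q\<ge>1.
         integrable M (\<lambda>\<omega>. h r i q \<omega> - gradf i (fav_query M s K eta stoch w0 E S h r i q \<omega>)) \<and>
         (\<forall>A\<in>sigma_sets (space M) (fav_query_gen M n E S h r i q).
            set_lebesgue_integral M A
              (\<lambda>\<omega>. h r i q \<omega> - gradf i (fav_query M s K eta stoch w0 E S h r i q \<omega>)) = 0)"
    and indep_other: "\<forall>r\<ge>1. prob_space.indep_set M
         (sigma_sets (space M) (fav_now_gen M n E S r))
         (sigma_sets (space M) (fav_other_gen M n E S h r))"
    and indep_SE: "\<forall>r\<ge>1. prob_space.indep_set M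
         (sigma_sets (space M) (ev_of M (S r) (count_space UNIV)))
         (sigma_sets (space M) (\<Union>i\<in>{1..n}. ev_of M (E r i) (count_space UNIV)))"
    and finite_exp: "\<forall>r\<ge>1. \<forall>i\<in>{1..n}.
         integrable M (\<lambda>\<omega>. (norm (fav_hcheck M K stoch E h r i \<omega>))\<^sup>2)"
  shows "integral\<^sup>L M (\<lambda>\<omega>. (norm (fav_mu M n s K eta stoch w0 E S h (Suc t) \<omega>
                                  - fav_mu M n s K eta stoch w0 E S h t \<omega>))\<^sup>2)
         \<le> (real s ^ 2 * eta ^ 2 / (real n * (real n + 1) ^ 2)) *
            (\<Sum>i\<in>{1..n}. integral\<^sup>L M (\<lambda>\<omega>. (norm (fav_hcheck M K stoch E h (Suc t) i \<omega>))\<^sup>2))"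
proof -
  interpret prob_space M by (rule P)
  let ?\<mu> = "fav_mu M n s K eta stoch w0 E S h"
  let ?A = "\<lambda>i. {\<omega>\<in>space M. i \<in> S (Suc t) \<omega>}"
  let ?Y = "\<lambda>i \<omega>. (norm (fav_hcheck M K stoch E h (Suc t) i \<omega>))\<^sup>2"
  define c where "c = eta\<^sup>2 * real s / (real n + 1)\<^sup>2"
  have c_eq: "c * (real s / real n) = real s ^ 2 * eta ^ 2 / (real n * (real n + 1) ^ 2)"
    unfolding c_def by (simp add: power2_eq_square mult_ac)
  have S: "S (Suc t) \<in> measurable M (count_space UNIV)" using S_meas by simp
  have participation: "integrable M (\<lambda>\<omega>. indicator (?A i) \<omega> * ?Y i \<omega>)"
      "(\<integral>\<omega>. indicator (?A i) \<omega> * ?Y i \<omega> \<partial>M) = real s / real n * expectation (?Y i)"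
    if "i \<in> {1..n}" for i
    using integral_participation_hcheck[of n E S "Suc t" h s i K stoch] that
      indep_other indep_SE S S_unif E_meas h_meas finite_exp s_bounds by simp_all
  have "AE \<omega> in M. S (Suc t) \<omega> \<subseteq> {1..n} \<and> card (S (Suc t) \<omega>) = s"
    using AE_uniform_subset[OF S, of "{1..n}" s] S_unif s_bounds by simp
  then have "AE \<omega> in M. (norm (?\<mu> (Suc t) \<omega> - ?\<mu> t \<omega>))\<^sup>2
      \<le> c * (\<Sum>i\<in>{1..n}. indicator (?A i) \<omega> * ?Y i \<omega>)"
    using AE_space by eventually_elim (unfold c_def, intro norm_fav_mu_Suc_diff_le, auto)
  then have "(\<integral>\<omega>. (norm (?\<mu> (Suc t) \<omega> - ?\<mu> t \<omega>))\<^sup>2 \<partial>M)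
      \<le> c * (\<Sum>i\<in>{1..n}. \<integral>\<omega>. indicator (?A i) \<omega> * ?Y i \<omega> \<partial>M)"
    by (rule integral_le_scaled_sum_AE[where X="\<lambda>i \<omega>. indicator (?A i) \<omega> * ?Y i \<omega>"])
      (auto simp: c_def participation(1))
  also have "\<dots> = c * (real s / real n) * (\<Sum>i\<in>{1..n}. expectation (?Y i))"
    using participation(2) by (simp add: sum_distrib_left mult.assoc)
  finally show ?thesis unfolding c_eq .
qed

end
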